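(* Let $G$ be a $4$-regular graph, let $f$ be a proper $5$-edge coloring of $G$, and let $P$ be a path in $G$ all of whose edges are colored $1$ or $2$ under $f$. (a) Suppose $P$ has length $4$ with internal vertices $v_1,v_2,v_3$ in order along $P$, and suppose at least one of the following conditions fails: (i) $|f(v_i)\cap f(v_j)\setminus\{1,2\}|=1$ for all $i,j\in\{1,2,3\}$ with $i\neq j$; (ii) if $x_1,x_2$ are the two neighbors of $v_2$ distinct from $v_1$ and $v_3$, then each of the colors $3,4,5$ appears at $x_1$ and at $x_2$ under $f$. Then there is a proper $5$-edge coloring $g$ of $G$, obtainable from $f$ by a sequence of interchanges on bicolored paths with both colors in $\{3,4,5\}$, such that some color in $\{3,4,5\}$ is missing from $g(v_1)\cup g(v_2)$ or from $g(v_2)\cup g(v_3)$. (b) If $P$ has length $5$ with internal vertices $v_1,v_2,v_3,v_4$ in order along $P$, then there is a proper $5$-edge coloring $g$ of $G$, obtainable from $f$ by a sequence of interchanges on bicolored paths with both colors in $\{3,4,5\}$, such that for some $i\in\{1,2,3\}$ some color in $\{3,4,5\}$ is missing from $g(v_i)\cup g(v_{i+1})$.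
   Context: Graphs are finite and simple. A proper $5$-edge coloring is a map $f:E(G)\to\{1,\dots,5\}$ with adjacent edges receiving distinct colors. For a vertex $v$, $f(v)$ denotes the set of colors of edges incident to $v$; a color appears at $v$ if it is in $f(v)$. $G_f(a,b)$ is the subgraph induced by the edges colored $a$ or $b$. An interchange swaps colors $a$ and $b$ on one connected component of $G_f(a,b)$; an interchange on a bicolored path with colors $a,b$ is one where that component is a path. *)

theory Defs
  imports Main
begin

definition simple_graph :: "'a set \<Rightarrow> 'a set set \<Rightarrow> bool" where
  "simple_graph V E \<longleftrightarrow> finite V \<and> (\<forall>e\<in>E. \<exists>u v. u \<noteq> v \<and> u \<in> V \<and> v \<in> V \<and> e = {u, v})"

definition neighbors :: "'a set set \<Rightarrow> 'a \<Rightarrow> 'a set" where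
  "neighbors E v = {u. {v, u} \<in> E}"

definition regular :: "'a set \<Rightarrow> 'a set set \<Rightarrow> nat \<Rightarrow> bool" where
  "regular V E k \<longleftrightarrow> (\<forall>v\<in>V. card {e\<in>E. v \<in> e} = k)"

definition proper_edge_coloring :: "'a set set \<Rightarrow> ('a set \<Rightarrow> nat) \<Rightarrow> nat \<Rightarrow> bool" where
  "proper_edge_coloring E f k \<longleftrightarrow>
     (\<forall>e\<in>E. f e \<in> {1..k}) \<and>
     (\<forall>e1\<in>E. \<forall>e2\<in>E. e1 \<noteq> e2 \<and> e1 \<inter> e2 \<noteq> {} \<longrightarrow> f e1 \<noteq> f e2)"

definition colors_at :: "'a set set \<Rightarrow> ('a set \<Rightarrow> nat) \<Rightarrow> 'a \<Rightarrow> nat set" where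
  "colors_at E f v = f ` {e\<in>E. v \<in> e}"

definition path_edges :: "'a list \<Rightarrow> 'a set set" where
  "path_edges xs = {{xs ! i, xs ! Suc i} | i. Suc i < length xs}"

definition is_path :: "'a set \<Rightarrow> 'a set set \<Rightarrow> 'a list \<Rightarrow> bool" where
  "is_path V E xs \<longleftrightarrow> xs \<noteq> [] \<and> distinct xs \<and> set xs \<subseteq> V \<and> path_edges xs \<subseteq> E"

definition bicolored_edges :: "'a set set \<Rightarrow> ('a set \<Rightarrow> nat) \<Rightarrow> nat \<Rightarrow> nat \<Rightarrow> 'a set set" where
  "bicolored_edges E f a b = {e\<in>E. f e = a \<or> f e = b}"

definition bicolored_component ::
  "'a set set \<Rightarrow> ('a set \<Rightarrow> nat) \<Rightarrow> nat \<Rightarrow> nat \<Rightarrow> 'a set set \<Rightarrow> bool" where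
  "bicolored_component E f a b C \<longleftrightarrow> C \<noteq> {} \<and>
     (\<exists>v. C = {e\<in>bicolored_edges E f a b.
                 \<exists>u\<in>e. (\<lambda>x y. {x, y} \<in> bicolored_edges E f a b)\<^sup>*\<^sup>* v u})"

definition swap_colors :: "nat \<Rightarrow> nat \<Rightarrow> nat \<Rightarrow> nat" where
  "swap_colors a b c = (if c = a then b else if c = b then a else c)"

definition path_interchange_345 ::
  "'a set \<Rightarrow> 'a set set \<Rightarrow> ('a set \<Rightarrow> nat) \<Rightarrow> ('a set \<Rightarrow> nat) \<Rightarrow> bool" where
  "path_interchange_345 V E f g \<longleftrightarrow>
     (\<exists>a b C. a \<in> {3,4,5} \<and> b \<in> {3,4,5} \<and> a \<noteq> b \<and>
        bicolored_component E f a b C \<and>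
        (\<exists>xs. is_path V E xs \<and> path_edges xs = C) \<and>
        g = (\<lambda>e. if e \<in> C then swap_colors a b (f e) else f e))"

end

theory Submission
  imports Defs
begin

(* In a 4-regular graph every vertex misses exactly one of the five colours, and an interior vertex of
   a path coloured 1, 2 misses one of 3, 4, 5; two consecutive interior vertices missing the same
   colour c leave c free on both. If v misses b, the (a,b)-component of v is a path starting at v whose
   interior vertices see both a and b, so interchanging it makes v miss a and changes the colour set
   of no vertex other than the far end of the path. A case analysis on the missing colours along the
   path, using one or two such interchanges (for paths of length 4 also along an edge from the middle
   vertex to a neighbour missing a colour in {3, 4, 5}), yields two consecutive vertices with a common
   missing colour. *)

lemma mem_path_edges: "e \<in> path_edges xs \<longleftrightarrow> (\<exists>i. Suc i < length xs \<and> e = {xs ! i, xs ! Suc i})"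
  unfolding path_edges_def by blast

lemma nth_edge_in_path_edges: "Suc i < length xs \<Longrightarrow> {xs ! i, xs ! Suc i} \<in> path_edges xs"
  by (auto simp: mem_path_edges)

lemma path_edges_subset_vertices: "e \<in> path_edges xs \<Longrightarrow> e \<subseteq> set xs"
  by (auto simp: mem_path_edges)

lemma path_edges_snoc:
  assumes "xs \<noteq> []"
  shows "path_edges (xs @ [y]) = insert {last xs, y} (path_edges xs)"
proof (intro set_eqI iffI)
  fix e assume "e \<in> path_edges (xs @ [y])"
  then obtain i where i: "Suc i < Suc (length xs)" "e = {(xs @ [y]) ! i, (xs @ [y]) ! Suc i}"
    by (auto simp: mem_path_edges)
  show "e \<in> insert {last xs, y} (path_edges xs)"
  proof (cases "Suc i < length xs")
    case True
    then show ?thesis using i by (auto simp: mem_path_edges nth_append)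
  next
    case False
    then have "i = length xs - 1" "Suc i = length xs" using i by simp_all
    then show ?thesis using i assms by (auto simp: nth_append last_conv_nth)
  qed
next
  fix e assume "e \<in> insert {last xs, y} (path_edges xs)"
  then show "e \<in> path_edges (xs @ [y])"
  proof
    assume "e = {last xs, y}"
    then show ?thesis using assms
      by (auto simp: mem_path_edges nth_append last_conv_nth intro!: exI[of _ "length xs - 1"])
  next
    assume "e \<in> path_edges xs"
    then obtain i where "Suc i < length xs" "e = {xs ! i, xs ! Suc i}" by (auto simp: mem_path_edges)
    then show ?thesis by (auto simp: mem_path_edges nth_append intro!: exI[of _ i])
  qed
qed

lemma path_vertex_reachable:
  assumes "is_path V H xs" "i < length xs"
  shows "(\<lambda>x y. {x, y} \<in> H)\<^sup>*\<^sup>* (hd xs) (xs ! i)"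
  using assms(2)
proof (induction i)
  case 0
  then show ?case using assms(1) by (simp add: is_path_def hd_conv_nth)
next
  case (Suc i)
  have "(\<lambda>x y. {x, y} \<in> H)\<^sup>*\<^sup>* (hd xs) (xs ! i)" using Suc by simp
  moreover have "{xs ! i, xs ! Suc i} \<in> H"
    using assms(1) nth_edge_in_path_edges[OF Suc.prems] by (auto simp: is_path_def)
  ultimately show ?case by (rule rtranclp.rtrancl_into_rtrancl)
qed

lemma path_interior_two_edges:
  assumes "is_path V H xs" "u \<in> set xs" "u \<noteq> hd xs" "u \<noteq> last xs"
  shows "\<exists>e1\<in>H. \<exists>e2\<in>H. e1 \<noteq> e2 \<and> u \<in> e1 \<and> u \<in> e2"
proof -
  have dist: "distinct xs" and ne: "xs \<noteq> []" and sub: "path_edges xs \<subseteq> H"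
    using assms(1) by (auto simp: is_path_def)
  obtain i where i: "i < length xs" "xs ! i = u" using assms(2) by (auto simp: in_set_conv_nth)
  obtain k where k: "i = Suc k" using i assms(3) ne by (cases i) (auto simp: hd_conv_nth)
  have si: "Suc i < length xs"
  proof (rule ccontr)
    assume "\<not> Suc i < length xs"
    then have "i = length xs - 1" using i by simp
    then show False using i assms(4) ne by (simp add: last_conv_nth)
  qed
  have "xs ! k \<noteq> xs ! Suc i" "xs ! k \<noteq> xs ! i"
    using dist si k by (simp_all add: nth_eq_iff_index_eq)
  then have distinct_edges: "{xs ! k, u} \<noteq> {u, xs ! Suc i}" using i by (auto simp: doubleton_eq_iff)
  have "{xs ! k, u} \<in> H" "{u, xs ! Suc i} \<in> H"
    using sub nth_edge_in_path_edges[of k xs] nth_edge_in_path_edges[OF si] si i k by auto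
  then show ?thesis
    using distinct_edges by (intro bexI[of _ "{xs ! k, u}"] bexI[of _ "{u, xs ! Suc i}"]) simp_all
qed

lemma swap_colors_swap_colors [simp]: "swap_colors a b (swap_colors a b c) = c"
  by (auto simp: swap_colors_def)

lemma inj_swap_colors: "inj (swap_colors a b)"
  by (metis swap_colors_swap_colors injI)

lemma swap_colors_image_eq: "a \<in> S \<Longrightarrow> b \<in> S \<Longrightarrow> swap_colors a b ` S = S"
  by (auto simp: swap_colors_def image_iff)

definition edge_component :: "'a set set \<Rightarrow> 'a \<Rightarrow> 'a set set" where
  "edge_component H v = {e \<in> H. \<exists>u\<in>e. (\<lambda>x y. {x, y} \<in> H)\<^sup>*\<^sup>* v u}"

lemma bicolored_component_iff:
  "bicolored_component E f a b C \<longleftrightarrow>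
     C \<noteq> {} \<and> (\<exists>v. C = edge_component (bicolored_edges E f a b) v)"
  unfolding bicolored_component_def edge_component_def ..

lemma bicolored_edges_subset: "bicolored_edges E f a b \<subseteq> E"
  by (auto simp: bicolored_edges_def)

definition interchange :: "'a set set \<Rightarrow> nat \<Rightarrow> nat \<Rightarrow> ('a set \<Rightarrow> nat) \<Rightarrow> 'a set \<Rightarrow> nat" where
  "interchange C a b f = (\<lambda>e. if e \<in> C then swap_colors a b (f e) else f e)"

lemma path_interchange_345_iff:
  "path_interchange_345 V E f g \<longleftrightarrow>
     (\<exists>a b C. a \<in> {3,4,5} \<and> b \<in> {3,4,5} \<and> a \<noteq> b \<and> bicolored_component E f a b C \<and>
        (\<exists>xs. is_path V E xs \<and> path_edges xs = C) \<and> g = interchange C a b f)"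
  unfolding path_interchange_345_def interchange_def ..

locale finite_graph =
  fixes V :: "'a set" and E :: "'a set set"
  assumes simple: "simple_graph V E"
begin

lemma finite_vertices: "finite V"
  using simple by (simp add: simple_graph_def)

lemma edge_cases:
  assumes "e \<in> E"
  obtains u w where "u \<noteq> w" "u \<in> V" "w \<in> V" "e = {u, w}"
  using simple assms unfolding simple_graph_def by blast

lemma edge_vertices:
  assumes "{x, y} \<in> E"
  shows "x \<in> V" "y \<in> V" "x \<noteq> y"
proof -
  obtain u w where "u \<noteq> w" "u \<in> V" "w \<in> V" "{x, y} = {u, w}" using edge_cases[OF assms] .
  then show "x \<in> V" "y \<in> V" "x \<noteq> y" by (auto simp: doubleton_eq_iff)
qed

lemma proper_edge_coloring_inj:
  assumes "proper_edge_coloring E f k" "e1 \<in> E" "e2 \<in> E" "x \<in> e1" "x \<in> e2" "f e1 = f e2"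
  shows "e1 = e2"
  using assms unfolding proper_edge_coloring_def by blast

lemma bicolored_edges_max_degree_2:
  assumes "proper_edge_coloring E f k"
    and "e1 \<in> bicolored_edges E f a b" "e2 \<in> bicolored_edges E f a b" "e3 \<in> bicolored_edges E f a b"
    and "x \<in> e1" "x \<in> e2" "x \<in> e3"
  shows "e1 = e2 \<or> e1 = e3 \<or> e2 = e3"
  using assms proper_edge_coloring_inj[OF assms(1)] unfolding bicolored_edges_def by auto

lemma bicolored_edges_both_colors:
  assumes "proper_edge_coloring E f k"
    and "e1 \<in> bicolored_edges E f a b" "e2 \<in> bicolored_edges E f a b" "e1 \<noteq> e2" "u \<in> e1" "u \<in> e2"
  shows "a \<in> colors_at E f u" "b \<in> colors_at E f u"
proof -
  have "f e1 \<noteq> f e2" using proper_edge_coloring_inj[OF assms(1)] assms(2-)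
    by (auto simp: bicolored_edges_def)
  then show "a \<in> colors_at E f u" "b \<in> colors_at E f u"
    using assms(2-) unfolding bicolored_edges_def colors_at_def by (auto simp: image_iff)
qed

lemma edge_component_reachable:
  assumes "H \<subseteq> E" "e \<in> edge_component H v" "u \<in> e"
  shows "(\<lambda>x y. {x, y} \<in> H)\<^sup>*\<^sup>* v u"
proof -
  obtain x where x: "e \<in> H" "x \<in> e" "(\<lambda>x y. {x, y} \<in> H)\<^sup>*\<^sup>* v x"
    using assms(2) unfolding edge_component_def by blast
  obtain p q where "e = {p, q}" using assms(1) x(1) edge_cases by blast
  then have "u = x \<or> e = {x, u}" using x(2) assms(3) by auto
  then show ?thesis
  proof
    assume "e = {x, u}"
    then have "{x, u} \<in> H" using x(1) by simp
    with x(3) show ?thesis by (rule rtranclp.rtrancl_into_rtrancl)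
  qed (use x in simp)
qed

lemma edge_component_closed:
  assumes "H \<subseteq> E" "e1 \<in> edge_component H v" "e2 \<in> H" "u \<in> e1" "u \<in> e2"
  shows "e2 \<in> edge_component H v"
  using edge_component_reachable[OF assms(1,2,4)] assms(3,5) unfolding edge_component_def by blast

(* If v lies on at most one edge of H and every vertex on at most two, a longest H-path starting at v
   cannot be extended, so it contains every H-edge reachable from v. *)
context
  fixes H :: "'a set set" and v :: 'a
  assumes H_edges: "H \<subseteq> E"
    and max_degree_2: "\<And>x e1 e2 e3. \<lbrakk>e1 \<in> H; e2 \<in> H; e3 \<in> H; x \<in> e1; x \<in> e2; x \<in> e3\<rbrakk>
                          \<Longrightarrow> e1 = e2 \<or> e1 = e3 \<or> e2 = e3"
    and end_vertex: "\<And>e1 e2. \<lbrakk>e1 \<in> H; e2 \<in> H; v \<in> e1; v \<in> e2\<rbrakk> \<Longrightarrow> e1 = e2"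
begin

lemma path_edge_at_vertex:
  assumes xs: "is_path V H xs" "hd xs = v" and i: "Suc i < length xs"
    and e: "e \<in> H" "xs ! i \<in> e"
  shows "e = {xs ! i, xs ! Suc i} \<or> (0 < i \<and> e = {xs ! (i - 1), xs ! i})"
proof -
  have dist: "distinct xs" and ne: "xs \<noteq> []" and sub: "path_edges xs \<subseteq> H"
    using xs(1) by (auto simp: is_path_def)
  have next_edge: "{xs ! i, xs ! Suc i} \<in> H" using sub nth_edge_in_path_edges[OF i] by blast
  show ?thesis
  proof (cases i)
    case 0
    then have "xs ! i = v" using xs ne by (simp add: hd_conv_nth)
    then show ?thesis using end_vertex[OF e(1) next_edge] e(2) by simp
  next
    case (Suc k)
    have prev_edge: "{xs ! k, xs ! i} \<in> H" using sub nth_edge_in_path_edges[of k xs] i Suc by auto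
    have "{xs ! k, xs ! i} \<noteq> {xs ! i, xs ! Suc i}"
      using dist i Suc by (auto simp: doubleton_eq_iff nth_eq_iff_index_eq)
    then show ?thesis using max_degree_2[OF e(1) prev_edge next_edge, of "xs ! i"] e(2) Suc by auto
  qed
qed

lemma path_no_chords:
  assumes xs: "is_path V H xs" "hd xs = v" and ij: "i < j" "j < length xs"
    and e: "{xs ! i, xs ! j} \<in> H"
  shows "j = Suc i"
proof -
  have dist: "distinct xs" using xs(1) by (simp add: is_path_def)
  have "{xs ! i, xs ! j} = {xs ! i, xs ! Suc i} \<or> (0 < i \<and> {xs ! i, xs ! j} = {xs ! (i - 1), xs ! i})"
    using path_edge_at_vertex[OF xs _ e] ij by simp
  then show ?thesis using dist ij by (auto simp: doubleton_eq_iff nth_eq_iff_index_eq)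
qed

lemma longest_path_exists:
  assumes "v \<in> V"
  obtains xs where "is_path V H xs" "hd xs = v"
    "\<And>ys. is_path V H ys \<Longrightarrow> hd ys = v \<Longrightarrow> length ys \<le> length xs"
proof -
  let ?S = "{xs. is_path V H xs \<and> hd xs = v}"
  have "[v] \<in> ?S" using assms by (simp add: is_path_def path_edges_def)
  then have "\<exists>xs\<in>?S. length xs = 1" by force
  moreover have "\<forall>n. (\<exists>xs\<in>?S. length xs = n) \<longrightarrow> n \<le> card V"
  proof (intro allI impI)
    fix n assume "\<exists>xs\<in>?S. length xs = n"
    then obtain xs where xs: "is_path V H xs" "length xs = n" by blast
    have "length xs = card (set xs)" using xs(1) by (simp add: is_path_def distinct_card)
    also have "\<dots> \<le> card V" using xs(1) finite_vertices by (intro card_mono) (auto simp: is_path_def)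
    finally show "n \<le> card V" using xs(2) by simp
  qed
  ultimately obtain n where n: "\<exists>xs\<in>?S. length xs = n"
      and greatest: "\<forall>m. (\<exists>xs\<in>?S. length xs = m) \<longrightarrow> m \<le> n"
    using Nat.ex_has_greatest_nat[of "\<lambda>n. \<exists>xs\<in>?S. length xs = n" 1 "card V"] by blast
  from n obtain xs where "xs \<in> ?S" "length xs = n" by blast
  then show ?thesis using greatest by (intro that[of xs]) auto
qed

lemma reachable_on_longest_path:
  assumes xs: "is_path V H xs" "hd xs = v"
    and longest: "\<And>ys. is_path V H ys \<Longrightarrow> hd ys = v \<Longrightarrow> length ys \<le> length xs"
    and reach: "(\<lambda>x y. {x, y} \<in> H)\<^sup>*\<^sup>* v y"
  shows "y \<in> set xs"
  using reach
proof (induction rule: rtranclp_induct)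
  case base
  then show ?case using xs by (auto simp: is_path_def)
next
  case (step x y)
  obtain i where i: "i < length xs" "xs ! i = x" using step.IH by (auto simp: in_set_conv_nth)
  show ?case
  proof (cases "Suc i < length xs")
    case True
    then have "{x, y} = {xs ! i, xs ! Suc i} \<or> (0 < i \<and> {x, y} = {xs ! (i - 1), xs ! i})"
      using path_edge_at_vertex[OF xs True step.hyps(2)] i by simp
    then show ?thesis using True by (auto simp: doubleton_eq_iff)
  next
    case False
    have ne: "xs \<noteq> []" using xs by (simp add: is_path_def)
    have "i = length xs - 1" using False i by simp
    then have last: "last xs = x" using ne i by (simp add: last_conv_nth)
    show ?thesis
    proof (rule ccontr)
      assume y: "y \<notin> set xs"
      have "y \<in> V" using step.hyps(2) H_edges edge_vertices by blast
      then have "is_path V H (xs @ [y])" "hd (xs @ [y]) = v"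
        using xs y ne last step.hyps(2) by (auto simp: is_path_def path_edges_snoc)
      then show False using longest by fastforce
    qed
  qed
qed

lemma path_edges_longest_path:
  assumes xs: "is_path V H xs" "hd xs = v"
    and longest: "\<And>ys. is_path V H ys \<Longrightarrow> hd ys = v \<Longrightarrow> length ys \<le> length xs"
  shows "path_edges xs = edge_component H v"
proof (intro set_eqI iffI)
  fix e assume "e \<in> path_edges xs"
  then obtain i where i: "Suc i < length xs" "e = {xs ! i, xs ! Suc i}" by (auto simp: mem_path_edges)
  then show "e \<in> edge_component H v"
    using xs path_vertex_reachable[OF xs(1), of i] nth_edge_in_path_edges[of i xs]
    unfolding edge_component_def is_path_def by auto
next
  fix e assume e: "e \<in> edge_component H v"
  then have "e \<in> H" by (simp add: edge_component_def)
  then obtain p q where pq: "p \<noteq> q" "e = {p, q}" using H_edges edge_cases by blast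
  have "p \<in> set xs" "q \<in> set xs"
    using reachable_on_longest_path[OF xs longest] edge_component_reachable[OF H_edges e] pq by auto
  then obtain i j where ij: "i < length xs" "xs ! i = p" "j < length xs" "xs ! j = q"
    by (auto simp: in_set_conv_nth)
  have "i \<noteq> j" using ij pq by auto
  then have "i < j \<or> j < i" by arith
  then show "e \<in> path_edges xs"
  proof
    assume "i < j"
    moreover have "{xs ! i, xs ! j} \<in> H" using \<open>e \<in> H\<close> pq ij by simp
    ultimately have "j = Suc i" using path_no_chords[OF xs] ij by blast
    then show ?thesis using ij pq nth_edge_in_path_edges[of i xs] by simp
  next
    assume "j < i"
    moreover have "{xs ! j, xs ! i} \<in> H" using \<open>e \<in> H\<close> pq ij by (simp add: insert_commute)
    ultimately have "i = Suc j" using path_no_chords[OF xs] ij by blast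
    then show ?thesis using ij pq nth_edge_in_path_edges[of j xs] by (simp add: insert_commute)
  qed
qed

lemma edge_component_is_path:
  assumes "v \<in> V"
  obtains xs where "is_path V H xs" "hd xs = v" "path_edges xs = edge_component H v"
proof -
  obtain xs where xs: "is_path V H xs" "hd xs = v"
    and longest: "\<And>ys. is_path V H ys \<Longrightarrow> hd ys = v \<Longrightarrow> length ys \<le> length xs"
    using longest_path_exists[OF assms] by blast
  show ?thesis using that[OF xs path_edges_longest_path[OF xs longest]] .
qed

end

lemma bicolored_component_is_path:
  assumes pf: "proper_edge_coloring E f k" and v: "v \<in> V"
    and end_v: "\<And>e1 e2. \<lbrakk>e1 \<in> bicolored_edges E f a b; e2 \<in> bicolored_edges E f a b; v \<in> e1; v \<in> e2\<rbrakk>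
                  \<Longrightarrow> e1 = e2"
  obtains xs where "is_path V E xs" "hd xs = v" "path_edges xs = edge_component (bicolored_edges E f a b) v"
    "\<forall>u\<in>set xs. u \<noteq> v \<and> u \<noteq> last xs \<longrightarrow> a \<in> colors_at E f u \<and> b \<in> colors_at E f u"
proof -
  let ?H = "bicolored_edges E f a b"
  have max_degree_2: "e1 = e2 \<or> e1 = e3 \<or> e2 = e3"
    if "e1 \<in> ?H" "e2 \<in> ?H" "e3 \<in> ?H" "x \<in> e1" "x \<in> e2" "x \<in> e3" for x e1 e2 e3
    using that by (rule bicolored_edges_max_degree_2[OF pf])
  obtain xs where xs: "is_path V ?H xs" "hd xs = v" "path_edges xs = edge_component ?H v"
    by (rule edge_component_is_path[OF bicolored_edges_subset max_degree_2 end_v v])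
  have interior: "\<forall>u\<in>set xs. u \<noteq> v \<and> u \<noteq> last xs \<longrightarrow> a \<in> colors_at E f u \<and> b \<in> colors_at E f u"
  proof (intro ballI impI)
    fix u assume u: "u \<in> set xs" "u \<noteq> v \<and> u \<noteq> last xs"
    obtain e1 e2 where "e1 \<in> ?H" "e2 \<in> ?H" "e1 \<noteq> e2" "u \<in> e1" "u \<in> e2"
      using path_interior_two_edges[OF xs(1) u(1)] u(2) xs(2) by blast
    then show "a \<in> colors_at E f u \<and> b \<in> colors_at E f u" using bicolored_edges_both_colors[OF pf] by blast
  qed
  have "is_path V E xs" using xs(1) bicolored_edges_subset[of E f a b] by (auto simp: is_path_def)
  from this xs(2,3) interior show ?thesis by (rule that)
qed

lemma colors_at_interchange:
  assumes C: "C = edge_component (bicolored_edges E f a b) v"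
  shows "colors_at E (interchange C a b f) u =
           (if \<exists>e\<in>C. u \<in> e then swap_colors a b ` colors_at E f u else colors_at E f u)"
proof (cases "\<exists>e\<in>C. u \<in> e")
  case True
  have "interchange C a b f e = swap_colors a b (f e)" if "e \<in> E" "u \<in> e" for e
  proof (cases "e \<in> C")
    case False
    have "e \<notin> bicolored_edges E f a b"
      using True False edge_component_closed[OF bicolored_edges_subset] that(2) C by blast
    then have "f e \<notin> {a, b}" using that(1) by (auto simp: bicolored_edges_def)
    then show ?thesis using False by (auto simp: interchange_def swap_colors_def)
  qed (simp add: interchange_def)
  then have "colors_at E (interchange C a b f) u = swap_colors a b ` colors_at E f u"
    unfolding colors_at_def image_image by (intro image_cong) auto
  then show ?thesis using True by simp
next
  case False
  then show ?thesis unfolding colors_at_def by (auto simp: interchange_def intro!: image_cong)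
qed

lemma proper_edge_coloring_interchange:
  assumes pf: "proper_edge_coloring E f k" and ab: "a \<in> {1..k}" "b \<in> {1..k}"
    and C: "C = edge_component (bicolored_edges E f a b) v"
  shows "proper_edge_coloring E (interchange C a b f) k"
  unfolding proper_edge_coloring_def
proof (intro conjI ballI impI)
  fix e assume "e \<in> E"
  then show "interchange C a b f e \<in> {1..k}"
    using pf ab by (auto simp: proper_edge_coloring_def interchange_def swap_colors_def)
next
  let ?g = "interchange C a b f"
  have C_bicolored: "f e \<in> {a, b}" if "e \<in> C" for e
    using that C by (auto simp: edge_component_def bicolored_edges_def)
  have mixed: "?g e1 \<noteq> ?g e2" if "e1 \<in> C" "e2 \<in> E" "e2 \<notin> C" "u \<in> e1" "u \<in> e2" for e1 e2 u
  proof -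
    have "e2 \<notin> bicolored_edges E f a b"
      using that edge_component_closed[OF bicolored_edges_subset] C by blast
    then have "f e2 \<notin> {a, b}" using that(2) by (auto simp: bicolored_edges_def)
    then show ?thesis using that(1,3) C_bicolored[OF that(1)]
      by (auto simp: interchange_def swap_colors_def)
  qed
  fix e1 e2 assume e: "e1 \<in> E" "e2 \<in> E" "e1 \<noteq> e2 \<and> e1 \<inter> e2 \<noteq> {}"
  then obtain u where u: "u \<in> e1" "u \<in> e2" by blast
  have "f e1 \<noteq> f e2" using pf e unfolding proper_edge_coloring_def by blast
  then show "?g e1 \<noteq> ?g e2"
    using mixed[OF _ e(2) _ u] mixed[OF _ e(1) _ u(2,1)] inj_swap_colors
    by (cases "e1 \<in> C"; cases "e2 \<in> C") (auto simp: interchange_def inj_eq)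
qed

lemma path_interchange_345_cases:
  assumes "path_interchange_345 V E f g"
  obtains a b v where "a \<in> {3,4,5}" "b \<in> {3,4,5}"
    "g = interchange (edge_component (bicolored_edges E f a b) v) a b f"
  using assms unfolding path_interchange_345_iff bicolored_component_iff by blast

lemma interchanges_345_proper:
  assumes "(path_interchange_345 V E)\<^sup>*\<^sup>* f g" "proper_edge_coloring E f 5"
  shows "proper_edge_coloring E g 5"
  using assms(1)
proof (induction rule: rtranclp_induct)
  case base
  show ?case using assms(2) .
next
  case (step g h)
  then obtain a b v where "a \<in> {3,4,5}" "b \<in> {3,4,5}"
    and h: "h = interchange (edge_component (bicolored_edges E g a b) v) a b g"
    by (elim path_interchange_345_cases)
  then have "a \<in> {1..5}" "b \<in> {1..5}" by auto
  then show ?case unfolding h using proper_edge_coloring_interchange[OF step.IH] by blast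
qed

lemma interchanges_345_fix_colors_12:
  assumes "(path_interchange_345 V E)\<^sup>*\<^sup>* f g" "f e \<in> {1, 2}"
  shows "g e = f e"
  using assms(1)
proof (induction rule: rtranclp_induct)
  case (step g h)
  then obtain a b v where ab: "a \<in> {3,4,5}" "b \<in> {3,4,5}"
    and h: "h = interchange (edge_component (bicolored_edges E g a b) v) a b g"
    by (elim path_interchange_345_cases)
  have "e \<notin> edge_component (bicolored_edges E g a b) v"
    using ab step.IH assms(2) by (auto simp: edge_component_def bicolored_edges_def)
  then show ?case using h step.IH by (simp add: interchange_def)
qed simp

lemma interchanges_345_colors_12:
  assumes "(path_interchange_345 V E)\<^sup>*\<^sup>* f g" "k \<in> {1, 2}" "k \<in> colors_at E f u"
  shows "k \<in> colors_at E g u"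
proof -
  obtain e where e: "e \<in> E" "u \<in> e" "f e = k" using assms(3) unfolding colors_at_def by blast
  then have "g e = k" using interchanges_345_fix_colors_12[OF assms(1)] assms(2) by auto
  then show ?thesis using e unfolding colors_at_def by blast
qed

end

lemma atLeastAtMost_1_5: "{1..5::nat} = {1, 2, 3, 4, 5}"
  by auto

locale four_regular_graph = finite_graph +
  assumes four_regular: "regular V E 4"
begin

definition missing_color :: "('a set \<Rightarrow> nat) \<Rightarrow> 'a \<Rightarrow> nat \<Rightarrow> bool" where
  "missing_color f v c \<longleftrightarrow> c \<in> {1..5} \<and> colors_at E f v = {1..5} - {c}"

lemma missing_color_exists:
  assumes pf: "proper_edge_coloring E f 5" and v: "v \<in> V"
  obtains c where "missing_color f v c"
proof -
  let ?I = "{e \<in> E. v \<in> e}"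
  have "card ?I = 4" using four_regular v unfolding regular_def by blast
  moreover have "inj_on f ?I" using proper_edge_coloring_inj[OF pf] by (auto simp: inj_on_def)
  ultimately have card4: "card (colors_at E f v) = 4" unfolding colors_at_def by (simp add: card_image)
  have sub: "colors_at E f v \<subseteq> {1..5}"
    using pf unfolding colors_at_def proper_edge_coloring_def by auto
  have "card ({1..5::nat} - colors_at E f v) = 1"
    using card_Diff_subset[OF _ sub] card4 finite_subset[OF sub] by simp
  then obtain c where c: "{1..5::nat} - colors_at E f v = {c}" using card_1_singletonE by blast
  then have "missing_color f v c" using sub unfolding missing_color_def by blast
  then show ?thesis using that by blast
qed

lemma missing_color_swap:
  assumes "missing_color f v c" "a \<in> {1..5}" "b \<in> {1..5}"
    and "colors_at E g v = swap_colors a b ` colors_at E f v"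
  shows "missing_color g v (swap_colors a b c)"
proof -
  have c: "c \<in> {1..5}" "colors_at E f v = {1..5} - {c}" using assms(1) by (simp_all add: missing_color_def)
  have "colors_at E g v = swap_colors a b ` {1..5} - {swap_colors a b c}"
    using assms(4) c(2) inj_swap_colors by (simp add: image_set_diff)
  also have "swap_colors a b ` {1..5} = {1..5}" using assms(2,3) by (rule swap_colors_image_eq)
  finally have "colors_at E g v = {1..5} - {swap_colors a b c}" .
  moreover have "swap_colors a b c \<in> {1..5}" using c(1) assms(2,3) by (simp add: swap_colors_def)
  ultimately show ?thesis by (simp add: missing_color_def)
qed

lemma missing_color_in_345:
  assumes "proper_edge_coloring E f 5" "x \<in> V" "\<not> {3, 4, 5} \<subseteq> colors_at E f x"
  obtains c where "c \<in> {3, 4, 5}" "missing_color f x c"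
proof -
  obtain c where c: "missing_color f x c" using missing_color_exists[OF assms(1,2)] .
  then have "c \<in> {3, 4, 5}" using assms(3) unfolding missing_color_def atLeastAtMost_1_5 by auto
  then show ?thesis using that c by blast
qed

lemma card_common_colors:
  assumes "missing_color f u mu" "missing_color f w mw" "mu \<in> {3,4,5}" "mw \<in> {3,4,5}" "mu \<noteq> mw"
  shows "card ((colors_at E f u \<inter> colors_at E f w) - {1, 2}) = 1"
proof -
  have u: "colors_at E f u = {1, 2, 3, 4, 5} - {mu}" and w: "colors_at E f w = {1, 2, 3, 4, 5} - {mw}"
    using assms(1,2) unfolding missing_color_def atLeastAtMost_1_5 by simp_all
  have "(colors_at E f u \<inter> colors_at E f w) - {1, 2} = {3, 4, 5} - {mu, mw}"
    unfolding u w by auto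
  then show ?thesis using assms(3-5) by auto
qed

lemma card_common_colors_pairwise:
  assumes miss: "\<forall>i\<in>I. missing_color f (u i) (m i) \<and> m i \<in> {3,4,5}" and inj: "inj_on m I"
  shows "\<forall>i\<in>I. \<forall>j\<in>I. i \<noteq> j \<longrightarrow> card ((colors_at E f (u i) \<inter> colors_at E f (u j)) - {1, 2}) = 1"
proof (intro ballI impI)
  fix i j assume ij: "i \<in> I" "j \<in> I" "i \<noteq> j"
  then have "m i \<noteq> m j" using inj by (auto dest: inj_onD)
  then show "card ((colors_at E f (u i) \<inter> colors_at E f (u j)) - {1, 2}) = 1"
    using card_common_colors miss ij(1,2) by blast
qed

lemma missing_color_interchange:
  assumes C: "C = edge_component (bicolored_edges E f a b) v" and ab: "a \<in> {1..5}" "b \<in> {1..5}"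
    and miss: "missing_color f u c"
  shows "missing_color (interchange C a b f) u
           (if colors_at E (interchange C a b f) u = colors_at E f u then c else swap_colors a b c)"
proof (cases "colors_at E (interchange C a b f) u = colors_at E f u")
  case True
  then show ?thesis using miss by (simp add: missing_color_def)
next
  case False
  then have "colors_at E (interchange C a b f) u = swap_colors a b ` colors_at E f u"
    using colors_at_interchange[OF C, of u] by presburger
  then show ?thesis using False missing_color_swap[OF miss ab] by simp
qed

lemma kempe_interchange:
  assumes pf: "proper_edge_coloring E f 5" and v: "v \<in> V" and miss: "missing_color f v b"
    and ab: "a \<in> {3,4,5}" "b \<in> {3,4,5}" "a \<noteq> b"
  obtains g w where "path_interchange_345 V E f g" "missing_color g v a"
    "\<And>u. u \<noteq> v \<Longrightarrow> u \<noteq> w \<Longrightarrow> colors_at E g u = colors_at E f u"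
    "\<And>u c. missing_color f u c \<Longrightarrow>
       missing_color g u (if colors_at E g u = colors_at E f u then c else swap_colors a b c)"
    "\<And>e. f e \<notin> {a, b} \<Longrightarrow> g e = f e"
    "\<And>u. colors_at E g u \<noteq> colors_at E f u \<Longrightarrow> (\<lambda>x y. {x, y} \<in> bicolored_edges E f a b)\<^sup>*\<^sup>* v u"
proof -
  define C where "C = edge_component (bicolored_edges E f a b) v"
  define g where "g = interchange C a b f"
  have ab15: "a \<in> {1..5}" "b \<in> {1..5}" using ab by auto
  have end_v: "e1 = e2"
    if "e1 \<in> bicolored_edges E f a b" "e2 \<in> bicolored_edges E f a b" "v \<in> e1" "v \<in> e2" for e1 e2
  proof -
    have "f e1 \<in> colors_at E f v" "f e2 \<in> colors_at E f v"
      using that unfolding colors_at_def bicolored_edges_def by auto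
    then have "f e1 = a" "f e2 = a"
      using that miss unfolding bicolored_edges_def missing_color_def by auto
    then show ?thesis using proper_edge_coloring_inj[OF pf] that by (auto simp: bicolored_edges_def)
  qed
  obtain xs where xs: "is_path V E xs" "hd xs = v" "path_edges xs = edge_component (bicolored_edges E f a b) v"
    and interior: "\<forall>u\<in>set xs. u \<noteq> v \<and> u \<noteq> last xs \<longrightarrow> a \<in> colors_at E f u \<and> b \<in> colors_at E f u"
    by (rule bicolored_component_is_path[OF pf v end_v])
  note xs = xs(1,2) xs(3)[folded C_def]
  have colors: "colors_at E g u =
      (if \<exists>e\<in>C. u \<in> e then swap_colors a b ` colors_at E f u else colors_at E f u)" for u
    unfolding g_def by (rule colors_at_interchange[OF C_def])
  have "a \<in> colors_at E f v" using miss ab unfolding missing_color_def atLeastAtMost_1_5 by auto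
  then obtain e0 where e0: "e0 \<in> E" "v \<in> e0" "f e0 = a" unfolding colors_at_def by blast
  then have e0_C: "e0 \<in> C" unfolding C_def edge_component_def bicolored_edges_def by auto
  show ?thesis
  proof (rule that[of g "last xs"])
    have "bicolored_component E f a b C" using e0_C unfolding bicolored_component_iff C_def by auto
    then show "path_interchange_345 V E f g" unfolding path_interchange_345_iff g_def using ab xs by blast
  next
    have "colors_at E g v = swap_colors a b ` colors_at E f v" using colors[of v] e0(2) e0_C by auto
    then have "missing_color g v (swap_colors a b b)" by (rule missing_color_swap[OF miss ab15])
    then show "missing_color g v a" using ab(3) by (simp add: swap_colors_def)
  next
    fix u assume u: "u \<noteq> v" "u \<noteq> last xs"
    show "colors_at E g u = colors_at E f u"
    proof (cases "\<exists>e\<in>C. u \<in> e")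
      case True
      \<comment> \<open>u is an interior vertex of the path, so it sees both a and b.\<close>
      then have "u \<in> set xs" using xs(3) path_edges_subset_vertices by blast
      then have "swap_colors a b ` colors_at E f u = colors_at E f u"
        using interior u swap_colors_image_eq by blast
      then show ?thesis using colors[of u] True by simp
    qed (simp add: colors)
  next
    fix u c assume "missing_color f u c"
    then show "missing_color g u (if colors_at E g u = colors_at E f u then c else swap_colors a b c)"
      unfolding g_def by (rule missing_color_interchange[OF C_def ab15])
  next
    fix e assume "f e \<notin> {a, b}"
    then have "e \<notin> C" unfolding C_def edge_component_def bicolored_edges_def by auto
    then show "g e = f e" by (simp add: g_def interchange_def)
  next
    fix u assume "colors_at E g u \<noteq> colors_at E f u"
    then obtain e where "e \<in> C" "u \<in> e" using colors[of u] by (auto split: if_split_asm)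
    then show "(\<lambda>x y. {x, y} \<in> bicolored_edges E f a b)\<^sup>*\<^sup>* v u"
      using edge_component_reachable[OF bicolored_edges_subset] unfolding C_def by blast
  qed
qed

lemma kempe_interchange_edge:
  assumes pf: "proper_edge_coloring E f 5" and edge: "{v, x} \<in> E" "f {v, x} = a"
    and miss: "missing_color f v b" "missing_color f x b"
    and ab: "a \<in> {3,4,5}" "b \<in> {3,4,5}" "a \<noteq> b"
  obtains g where "path_interchange_345 V E f g" "missing_color g v a"
    "\<And>u. u \<noteq> v \<Longrightarrow> u \<noteq> x \<Longrightarrow> colors_at E g u = colors_at E f u"
proof -
  obtain g w where g: "path_interchange_345 V E f g" "missing_color g v a"
    and reach: "\<And>u. colors_at E g u \<noteq> colors_at E f u \<Longrightarrow>
                  (\<lambda>x y. {x, y} \<in> bicolored_edges E f a b)\<^sup>*\<^sup>* v u"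
    using kempe_interchange[OF pf edge_vertices(1)[OF edge(1)] miss(1) ab] by metis
  have b_missing: "b \<notin> colors_at E f v" "b \<notin> colors_at E f x"
    using miss unfolding missing_color_def by auto
  have "u \<in> {v, x}" if "(\<lambda>x y. {x, y} \<in> bicolored_edges E f a b)\<^sup>*\<^sup>* v u" for u
    using that
  proof (induction rule: rtranclp_induct)
    case (step y z)
    have yz: "{y, z} \<in> E" "f {y, z} \<in> {a, b}" using step.hyps(2) by (auto simp: bicolored_edges_def)
    have "f {y, z} \<in> colors_at E f y" using yz(1) by (auto simp: colors_at_def)
    then have "f {y, z} = f {v, x}" using b_missing yz(2) step.IH edge(2) by auto
    then have "{y, z} = {v, x}" using proper_edge_coloring_inj[OF pf yz(1) edge(1), of y] step.IH by auto
    then show ?case by (auto simp: doubleton_eq_iff)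
  qed simp
  then show ?thesis using that g reach by blast
qed

abbreviation interchanges :: "('a set \<Rightarrow> nat) \<Rightarrow> ('a set \<Rightarrow> nat) \<Rightarrow> bool" where
  "interchanges \<equiv> (path_interchange_345 V E)\<^sup>*\<^sup>*"

definition share_missing_color :: "('a set \<Rightarrow> nat) \<Rightarrow> 'a \<Rightarrow> 'a \<Rightarrow> bool" where
  "share_missing_color g u w \<longleftrightarrow> (\<exists>c. missing_color g u c \<and> missing_color g w c)"

lemma share_missing_color_sym: "share_missing_color g u w \<Longrightarrow> share_missing_color g w u"
  unfolding share_missing_color_def by blast

lemma share_missing_color_middle_swap:
  assumes pf: "proper_edge_coloring E f 5" and u2: "u2 \<in> V"
    and d: "u1 \<noteq> u2" "u2 \<noteq> u3" "u1 \<noteq> u3"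
    and miss: "missing_color f u1 a" "missing_color f u2 b" "missing_color f u3 a"
    and ab: "a \<in> {3,4,5}" "b \<in> {3,4,5}" "a \<noteq> b"
  shows "\<exists>g. interchanges f g \<and> (share_missing_color g u1 u2 \<or> share_missing_color g u2 u3)"
proof -
  obtain g w where g: "path_interchange_345 V E f g" "missing_color g u2 a"
    and fixed: "\<And>u. u \<noteq> u2 \<Longrightarrow> u \<noteq> w \<Longrightarrow> colors_at E g u = colors_at E f u"
    using kempe_interchange[OF pf u2 miss(2) ab] by metis
  have "missing_color g u1 a \<or> missing_color g u3 a"
    using fixed[of u1] fixed[of u3] d miss(1,3) unfolding missing_color_def by metis
  then show ?thesis using g unfolding share_missing_color_def by blast
qed

lemma share_missing_color_edge_swap:
  assumes pf: "proper_edge_coloring E f 5" and d: "u1 \<noteq> u2" "x \<noteq> u1"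
    and edge: "{u2, x} \<in> E" "f {u2, x} = a"
    and miss: "missing_color f u1 a" "missing_color f u2 c" "missing_color f x c"
    and ac: "a \<in> {3,4,5}" "c \<in> {3,4,5}" "a \<noteq> c"
  shows "\<exists>g. interchanges f g \<and> share_missing_color g u1 u2"
proof -
  obtain g where g: "path_interchange_345 V E f g" "missing_color g u2 a"
    and fixed: "\<And>u. u \<noteq> u2 \<Longrightarrow> u \<noteq> x \<Longrightarrow> colors_at E g u = colors_at E f u"
    using kempe_interchange_edge[OF pf edge miss(2,3) ac] by metis
  have "missing_color g u1 a" using fixed[of u1] d miss(1) unfolding missing_color_def by simp
  then show ?thesis using g unfolding share_missing_color_def by blast
qed

lemma share_missing_color_via_neighbour:
  assumes pf: "proper_edge_coloring E f 5"
    and d: "u1 \<noteq> u2" "u2 \<noteq> u3" "u1 \<noteq> u3" "x \<noteq> u1" "x \<noteq> u3"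
    and edge: "{u2, x} \<in> E" "f {u2, x} = a"
    and miss: "missing_color f u1 a" "missing_color f u2 c" "missing_color f u3 b" "missing_color f x e"
    and abc: "a \<in> {3,4,5}" "b \<in> {3,4,5}" "c \<in> {3,4,5}" "a \<noteq> b" "a \<noteq> c" "b \<noteq> c"
    and e: "e \<in> {3,4,5}" "e \<noteq> a"
  shows "\<exists>g. interchanges f g \<and> (share_missing_color g u1 u2 \<or> share_missing_color g u2 u3)"
proof -
  have x: "x \<in> V" "u2 \<noteq> x" using edge_vertices[OF edge(1)] by auto
  have "e = c \<or> e = b" using abc e by auto
  then show ?thesis
  proof
    assume "e = c"
    then show ?thesis
      using share_missing_color_edge_swap[OF pf d(1,4) edge miss(1,2) miss(4)[unfolded \<open>e = c\<close>] abc(1,3,5)]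
      by blast
  next
    assume "e = b"
    \<comment> \<open>Recolour the (c,b)-path starting at x, so that x misses c like u2.\<close>
    obtain g1 w where g1: "path_interchange_345 V E f g1" "missing_color g1 x c"
      and fixed: "\<And>u. u \<noteq> x \<Longrightarrow> u \<noteq> w \<Longrightarrow> colors_at E g1 u = colors_at E f u"
      and swapped: "\<And>u m. missing_color f u m \<Longrightarrow> missing_color g1 u
                       (if colors_at E g1 u = colors_at E f u then m else swap_colors c b m)"
      and kept: "\<And>e. f e \<notin> {c, b} \<Longrightarrow> g1 e = f e"
      using kempe_interchange[OF pf x(1) miss(4)[unfolded \<open>e = b\<close>] abc(3,2) abc(6)[symmetric]] by metis
    have swaps: "swap_colors c b c = b" "swap_colors c b b = c" "swap_colors c b a = a"
      using abc by (auto simp: swap_colors_def)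
    consider "colors_at E g1 u2 \<noteq> colors_at E f u2"
      | "colors_at E g1 u2 = colors_at E f u2" "colors_at E g1 u3 \<noteq> colors_at E f u3"
      | "colors_at E g1 u2 = colors_at E f u2" "colors_at E g1 u3 = colors_at E f u3"
      by blast
    then show ?thesis
    proof cases
      case 1
      then have "u2 = w" using fixed x(2) by metis
      then have "missing_color g1 u3 b" using swapped[OF miss(3)] fixed[of u3] d by simp
      moreover have "missing_color g1 u2 b" using swapped[OF miss(2)] 1 swaps by simp
      ultimately show ?thesis using g1 unfolding share_missing_color_def by blast
    next
      case 2
      then have "missing_color g1 u2 c" "missing_color g1 u3 c"
        using swapped[OF miss(2)] swapped[OF miss(3)] swaps by simp_all
      then show ?thesis using g1 unfolding share_missing_color_def by blast
    next
      case 3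
      have pf1: "proper_edge_coloring E g1 5" using interchanges_345_proper g1(1) pf by blast
      have miss1: "missing_color g1 u1 a" "missing_color g1 u2 c"
        using swapped[OF miss(1), unfolded swaps(3)] swapped[OF miss(2)] 3 by simp_all
      have "g1 {u2, x} = a" using kept edge(2) abc by auto
      from share_missing_color_edge_swap[OF pf1 d(1,4) edge(1) this miss1 g1(2) abc(1,3,5)]
      obtain g2 where "interchanges g1 g2" "share_missing_color g2 u1 u2" by blast
      moreover have "interchanges f g1" using g1(1) by simp
      ultimately show ?thesis by (meson rtranclp_trans)
    qed
  qed
qed

lemma share_missing_color_three:
  assumes pf: "proper_edge_coloring E f 5" and d: "u1 \<noteq> u2" "u2 \<noteq> u3" "u1 \<noteq> u3"
    and path: "{u1, u2} \<in> E" "{u2, u3} \<in> E" "f {u1, u2} \<in> {1, 2}" "f {u2, u3} \<in> {1, 2}"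
    and miss: "missing_color f u1 m1" "missing_color f u2 m2" "missing_color f u3 m3"
    and m: "m1 \<in> {3,4,5}" "m2 \<in> {3,4,5}" "m3 \<in> {3,4,5}" "m1 \<noteq> m2" "m2 \<noteq> m3" "m1 \<noteq> m3"
    and x: "{u2, x} \<in> E" "x \<noteq> u1" "x \<noteq> u3" "missing_color f x e" "e \<in> {3,4,5}"
  shows "\<exists>g. interchanges f g \<and> (share_missing_color g u1 u2 \<or> share_missing_color g u2 u3)"
proof -
  have "u2 \<noteq> x" using edge_vertices(3)[OF x(1)] .
  then have edges_differ: "{u2, x} \<noteq> {u1, u2}" "{u2, x} \<noteq> {u2, u3}" "{u1, u2} \<noteq> {u2, u3}"
    using d x(2,3) by (auto simp: doubleton_eq_iff)
  have "f {u2, x} \<noteq> f {u1, u2}" "f {u2, x} \<noteq> f {u2, u3}" "f {u1, u2} \<noteq> f {u2, u3}"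
    using proper_edge_coloring_inj[OF pf] x(1) path(1,2) edges_differ by blast+
  then have "f {u2, x} \<notin> {1, 2}" using path(3,4) by auto
  moreover have "f {u2, x} \<in> colors_at E f u2" "f {u2, x} \<in> colors_at E f x"
    using x(1) unfolding colors_at_def by auto
  ultimately have "f {u2, x} \<in> {m1, m3}" "e \<noteq> f {u2, x}"
    using miss(2) x(4) m unfolding missing_color_def atLeastAtMost_1_5 by auto
  then consider "f {u2, x} = m1" "e \<noteq> m1" | "f {u2, x} = m3" "e \<noteq> m3" by blast
  then show ?thesis
  proof cases
    case 1
    then show ?thesis
      using share_missing_color_via_neighbour[OF pf d x(2,3) x(1) 1(1) miss x(4) m(1,3,2) m(6,4) m(5)[symmetric] x(5) 1(2)]
      by blast
  next
    case 2
    have "u3 \<noteq> u2" "u2 \<noteq> u1" "u3 \<noteq> u1" using d by auto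
    from share_missing_color_via_neighbour[OF pf this x(3,2) x(1) 2(1) miss(3,2,1) x(4)
        m(3,1,2) m(6)[symmetric] m(5)[symmetric] m(4) x(5) 2(2)]
    show ?thesis using share_missing_color_sym by blast
  qed
qed

lemma share_missing_color_four_cyclic:
  assumes pf: "proper_edge_coloring E f 5" and vertices: "u1 \<in> V" "u2 \<in> V"
    and d: "u1 \<noteq> u2" "u1 \<noteq> u3" "u1 \<noteq> u4" "u2 \<noteq> u3" "u3 \<noteq> u4"
    and miss: "missing_color f u1 m1" "missing_color f u2 m2" "missing_color f u3 m3" "missing_color f u4 m1"
    and m: "m1 \<in> {3,4,5}" "m2 \<in> {3,4,5}" "m3 \<in> {3,4,5}" "m1 \<noteq> m2" "m2 \<noteq> m3" "m1 \<noteq> m3"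
  shows "\<exists>g. interchanges f g \<and>
    (share_missing_color g u1 u2 \<or> share_missing_color g u2 u3 \<or> share_missing_color g u3 u4)"
proof -
  \<comment> \<open>After making u1 miss m3, either u3 or u4 has changed and shares a colour with its
    neighbour, or u1 u2 u3 miss m3 m2 m3.\<close>
  obtain g1 w where g1: "path_interchange_345 V E f g1" "missing_color g1 u1 m3"
    and fixed: "\<And>u. u \<noteq> u1 \<Longrightarrow> u \<noteq> w \<Longrightarrow> colors_at E g1 u = colors_at E f u"
    and swapped: "\<And>u c. missing_color f u c \<Longrightarrow> missing_color g1 u
                     (if colors_at E g1 u = colors_at E f u then c else swap_colors m3 m1 c)"
    using kempe_interchange[OF pf vertices(1) miss(1) m(3,1) m(6)[symmetric]] by metis
  have swaps: "swap_colors m3 m1 m1 = m3" "swap_colors m3 m1 m3 = m1" "swap_colors m3 m1 m2 = m2"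
    using m by (auto simp: swap_colors_def)
  have miss2: "missing_color g1 u2 m2" using swapped[OF miss(2), unfolded swaps(3)] by simp
  consider "colors_at E g1 u3 \<noteq> colors_at E f u3"
    | "colors_at E g1 u3 = colors_at E f u3" "colors_at E g1 u4 \<noteq> colors_at E f u4"
    | "colors_at E g1 u3 = colors_at E f u3" "colors_at E g1 u4 = colors_at E f u4"
    by blast
  then show ?thesis
  proof cases
    case 1
    then have "u3 = w" using fixed d by metis
    then have "missing_color g1 u4 m1" using swapped[OF miss(4)] fixed[of u4] d by simp
    moreover have "missing_color g1 u3 m1" using swapped[OF miss(3)] 1 swaps by simp
    ultimately show ?thesis using g1 unfolding share_missing_color_def by blast
  next
    case 2
    then have "missing_color g1 u3 m3" "missing_color g1 u4 m3"
      using swapped[OF miss(3)] swapped[OF miss(4)] swaps by simp_all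
    then show ?thesis using g1 unfolding share_missing_color_def by blast
  next
    case 3
    have pf1: "proper_edge_coloring E g1 5" using interchanges_345_proper g1(1) pf by blast
    have "missing_color g1 u3 m3" using swapped[OF miss(3)] 3 by simp
    from share_missing_color_middle_swap[OF pf1 vertices(2) d(1,4,2) g1(2) miss2 this m(3,2) m(5)[symmetric]]
    obtain g2 where "interchanges g1 g2" "share_missing_color g2 u1 u2 \<or> share_missing_color g2 u2 u3"
      by blast
    moreover have "interchanges f g1" using g1(1) by simp
    ultimately show ?thesis by (meson rtranclp_trans)
  qed
qed

lemma share_missing_color_four:
  assumes pf: "proper_edge_coloring E f 5" and vertices: "u1 \<in> V" "u2 \<in> V" "u3 \<in> V"
    and d: "u1 \<noteq> u2" "u1 \<noteq> u3" "u1 \<noteq> u4" "u2 \<noteq> u3" "u2 \<noteq> u4" "u3 \<noteq> u4"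
    and miss: "missing_color f u1 m1" "missing_color f u2 m2" "missing_color f u3 m3" "missing_color f u4 m4"
    and m: "m1 \<in> {3,4,5}" "m2 \<in> {3,4,5}" "m3 \<in> {3,4,5}" "m4 \<in> {3,4,5}"
  shows "\<exists>g. interchanges f g \<and>
    (share_missing_color g u1 u2 \<or> share_missing_color g u2 u3 \<or> share_missing_color g u3 u4)"
proof -
  consider "m1 = m2 \<or> m2 = m3 \<or> m3 = m4" | "m1 = m3" "m1 \<noteq> m2" | "m2 = m4" "m2 \<noteq> m3"
    | "m4 = m1" "m1 \<noteq> m2" "m2 \<noteq> m3" "m1 \<noteq> m3"
    using m by auto
  then show ?thesis
  proof cases
    case 1
    then show ?thesis using miss unfolding share_missing_color_def by (intro exI[of _ f]) auto
  next
    case 2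
    then show ?thesis
      using share_missing_color_middle_swap[OF pf vertices(2) d(1,4,2) miss(1,2) miss(3)[folded 2(1)] m(1,2)]
      by blast
  next
    case 3
    then show ?thesis
      using share_missing_color_middle_swap[OF pf vertices(3) d(4,6,5) miss(2,3) miss(4)[folded 3(1)] m(2,3)]
      by blast
  next
    case 4
    from share_missing_color_four_cyclic[OF pf vertices(1,2) d(1,2,3,4,6) miss(1-3) miss(4)[unfolded 4(1)]
        m(1-3) 4(2-4)]
    show ?thesis .
  qed
qed

lemma path_interior_colors_12:
  assumes pf: "proper_edge_coloring E f 5" and P: "is_path V E P"
    and col: "\<forall>e\<in>path_edges P. f e \<in> {1, 2}" and i: "0 < i" "Suc i < length P"
  shows "1 \<in> colors_at E f (P ! i)" "2 \<in> colors_at E f (P ! i)"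
proof -
  obtain k where k: "i = Suc k" using i by (cases i) auto
  have edges: "{P ! k, P ! i} \<in> path_edges P" "{P ! i, P ! Suc i} \<in> path_edges P"
    using nth_edge_in_path_edges[of k P] nth_edge_in_path_edges[of i P] i k by auto
  then have in_E: "{P ! k, P ! i} \<in> E" "{P ! i, P ! Suc i} \<in> E" using P by (auto simp: is_path_def)
  have "P ! k \<noteq> P ! Suc i" using P i k by (simp add: is_path_def nth_eq_iff_index_eq)
  then have "{P ! k, P ! i} \<noteq> {P ! i, P ! Suc i}" by (auto simp: doubleton_eq_iff)
  then have "f {P ! k, P ! i} \<noteq> f {P ! i, P ! Suc i}"
    using proper_edge_coloring_inj[OF pf in_E, of "P ! i"] by auto
  moreover have "f {P ! k, P ! i} \<in> {1, 2}" "f {P ! i, P ! Suc i} \<in> {1, 2}" using col edges by auto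
  moreover have "f {P ! k, P ! i} \<in> colors_at E f (P ! i)" "f {P ! i, P ! Suc i} \<in> colors_at E f (P ! i)"
    using in_E by (auto simp: colors_at_def)
  ultimately show "1 \<in> colors_at E f (P ! i)" "2 \<in> colors_at E f (P ! i)" by auto
qed

lemma path_interior_missing_colors:
  assumes pf: "proper_edge_coloring E f 5" and P: "is_path V E P"
    and col: "\<forall>e\<in>path_edges P. f e \<in> {1, 2}"
  obtains m where "\<forall>i. 0 < i \<and> Suc i < length P \<longrightarrow> missing_color f (P ! i) (m i) \<and> m i \<in> {3,4,5}"
proof -
  have "\<exists>c. 0 < i \<and> Suc i < length P \<longrightarrow> missing_color f (P ! i) c \<and> c \<in> {3,4,5}" for i
  proof (cases "0 < i \<and> Suc i < length P")
    case True
    then have "P ! i \<in> V" using P nth_mem[of i P] unfolding is_path_def by auto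
    then obtain c where c: "missing_color f (P ! i) c" using missing_color_exists[OF pf] by blast
    moreover have "c \<in> {3,4,5}"
      using c path_interior_colors_12[OF pf P col] True unfolding missing_color_def atLeastAtMost_1_5 by auto
    ultimately show ?thesis by blast
  qed blast
  then show ?thesis using that choice by metis
qed

lemma share_missing_color_free_color:
  assumes pf: "proper_edge_coloring E f 5" and P: "is_path V E P"
    and col: "\<forall>e\<in>path_edges P. f e \<in> {1, 2}" and i: "0 < i" "Suc i < length P"
    and g: "interchanges f g" "share_missing_color g (P ! i) w"
  shows "\<exists>c\<in>{3, 4, 5}. c \<notin> colors_at E g (P ! i) \<union> colors_at E g w"
proof -
  have "1 \<in> colors_at E g (P ! i)" "2 \<in> colors_at E g (P ! i)"
    using interchanges_345_colors_12[OF g(1)] path_interior_colors_12[OF pf P col i] by auto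
  moreover obtain c where "missing_color g (P ! i) c" "missing_color g w c"
    using g(2) unfolding share_missing_color_def by blast
  ultimately show ?thesis unfolding missing_color_def atLeastAtMost_1_5 by auto
qed

lemma share_missing_color_on_path_4:
  assumes pf: "proper_edge_coloring E f 5" and P: "is_path V E P" "length P = 5"
    and col: "\<forall>e\<in>path_edges P. f e \<in> {1, 2}"
    and fails: "\<not> ((\<forall>i\<in>{1,2,3::nat}. \<forall>j\<in>{1,2,3}. i \<noteq> j \<longrightarrow>
               card ((colors_at E f (P ! i) \<inter> colors_at E f (P ! j)) - {1, 2}) = 1) \<and>
            (\<forall>x\<in>neighbors E (P ! 2). x \<noteq> P ! 1 \<and> x \<noteq> P ! 3 \<longrightarrow>
               {3, 4, 5} \<subseteq> colors_at E f x))"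
  shows "\<exists>g. interchanges f g \<and>
    (share_missing_color g (P ! 1) (P ! 2) \<or> share_missing_color g (P ! 2) (P ! 3))"
proof -
  obtain m where m: "\<forall>i. 0 < i \<and> Suc i < length P \<longrightarrow> missing_color f (P ! i) (m i) \<and> m i \<in> {3,4,5}"
    using path_interior_missing_colors[OF pf P(1) col] by blast
  then have m123: "\<forall>i\<in>{1,2,3}. missing_color f (P ! i) (m i) \<and> m i \<in> {3,4,5}" using P(2) by auto
  then have miss: "missing_color f (P ! 1) (m 1)" "missing_color f (P ! 2) (m 2)" "missing_color f (P ! 3) (m 3)"
    and m345: "m 1 \<in> {3,4,5}" "m 2 \<in> {3,4,5}" "m 3 \<in> {3,4,5}"
    by simp_all
  have d: "P ! 1 \<noteq> P ! 2" "P ! 2 \<noteq> P ! 3" "P ! 1 \<noteq> P ! 3"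
    using P unfolding is_path_def by (simp_all add: nth_eq_iff_index_eq)
  consider "m 1 = m 2 \<or> m 2 = m 3" | "m 1 = m 3" "m 1 \<noteq> m 2" | "m 1 \<noteq> m 2" "m 2 \<noteq> m 3" "m 1 \<noteq> m 3"
    by blast
  then show ?thesis
  proof cases
    case 1
    then show ?thesis using miss unfolding share_missing_color_def by (intro exI[of _ f]) auto
  next
    case 2
    have "P ! 2 \<in> V" using P nth_mem[of 2 P] unfolding is_path_def by auto
    from share_missing_color_middle_swap[OF pf this d miss(1,2) miss(3)[folded 2(1)] m345(1,2) 2(2)]
    show ?thesis .
  next
    case 3
    \<comment> \<open>With three distinct missing colours condition (i) holds, so condition (ii) fails.\<close>
    have "inj_on m {1, 2, 3}" using 3 by (auto simp: inj_on_def)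
    with card_common_colors_pairwise[OF m123] obtain x where x: "x \<in> neighbors E (P ! 2)"
        "x \<noteq> P ! 1" "x \<noteq> P ! 3" "\<not> {3, 4, 5} \<subseteq> colors_at E f x"
      using fails by blast
    have x_edge: "{P ! 2, x} \<in> E" using x(1) by (simp add: neighbors_def)
    obtain e where "missing_color f x e" "e \<in> {3,4,5}"
      using missing_color_in_345[OF pf edge_vertices(2)[OF x_edge] x(4)] by blast
    moreover have "{P ! 1, P ! 2} \<in> path_edges P" "{P ! 2, P ! 3} \<in> path_edges P"
      using nth_edge_in_path_edges[of 1 P] nth_edge_in_path_edges[of 2 P] P(2) by (simp_all add: numeral_eq_Suc)
    then have "{P ! 1, P ! 2} \<in> E" "{P ! 2, P ! 3} \<in> E" "f {P ! 1, P ! 2} \<in> {1, 2}" "f {P ! 2, P ! 3} \<in> {1, 2}"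
      using P(1) col by (auto simp: is_path_def)
    ultimately show ?thesis
      using share_missing_color_three[OF pf d] miss m345 3 x_edge x(2,3) by blast
  qed
qed

lemma free_color_on_path_4:
  assumes pf: "proper_edge_coloring E f 5" and P: "is_path V E P" "length P = 5"
    and col: "\<forall>e\<in>path_edges P. f e \<in> {1, 2}"
    and fails: "\<not> ((\<forall>i\<in>{1,2,3::nat}. \<forall>j\<in>{1,2,3}. i \<noteq> j \<longrightarrow>
               card ((colors_at E f (P ! i) \<inter> colors_at E f (P ! j)) - {1, 2}) = 1) \<and>
            (\<forall>x\<in>neighbors E (P ! 2). x \<noteq> P ! 1 \<and> x \<noteq> P ! 3 \<longrightarrow>
               {3, 4, 5} \<subseteq> colors_at E f x))"
  shows "\<exists>g. interchanges f g \<and> proper_edge_coloring E g 5 \<and>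
              (\<exists>c\<in>{3, 4, 5}. c \<notin> colors_at E g (P ! 1) \<union> colors_at E g (P ! 2) \<or>
                              c \<notin> colors_at E g (P ! 2) \<union> colors_at E g (P ! 3))"
proof -
  obtain g where g: "interchanges f g"
    "share_missing_color g (P ! 1) (P ! 2) \<or> share_missing_color g (P ! 2) (P ! 3)"
    using share_missing_color_on_path_4[OF assms] by blast
  have "\<exists>c\<in>{3, 4, 5}. c \<notin> colors_at E g (P ! 1) \<union> colors_at E g (P ! 2) \<or>
                        c \<notin> colors_at E g (P ! 2) \<union> colors_at E g (P ! 3)"
    using g(2)
  proof
    assume "share_missing_color g (P ! 1) (P ! 2)"
    from share_missing_color_free_color[OF pf P(1) col _ _ g(1) this] P(2) show ?thesis by auto
  next
    assume "share_missing_color g (P ! 2) (P ! 3)"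
    from share_missing_color_free_color[OF pf P(1) col _ _ g(1) this] P(2) show ?thesis by auto
  qed
  then show ?thesis using g(1) interchanges_345_proper[OF g(1) pf] by blast
qed

lemma free_color_on_path_5:
  assumes pf: "proper_edge_coloring E f 5" and P: "is_path V E P" "length P = 6"
    and col: "\<forall>e\<in>path_edges P. f e \<in> {1, 2}"
  shows "\<exists>g. interchanges f g \<and> proper_edge_coloring E g 5 \<and>
              (\<exists>i\<in>{1, 2, 3}. \<exists>c\<in>{3, 4, 5}.
                  c \<notin> colors_at E g (P ! i) \<union> colors_at E g (P ! Suc i))"
proof -
  obtain m where m: "\<forall>i. 0 < i \<and> Suc i < length P \<longrightarrow> missing_color f (P ! i) (m i) \<and> m i \<in> {3,4,5}"
    using path_interior_missing_colors[OF pf P(1) col] by blast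
  have V: "P ! 1 \<in> V" "P ! 2 \<in> V" "P ! 3 \<in> V"
    using P nth_mem[of 1 P] nth_mem[of 2 P] nth_mem[of 3 P] unfolding is_path_def by auto
  have d: "P ! 1 \<noteq> P ! 2" "P ! 1 \<noteq> P ! 3" "P ! 1 \<noteq> P ! 4" "P ! 2 \<noteq> P ! 3" "P ! 2 \<noteq> P ! 4"
    "P ! 3 \<noteq> P ! 4"
    using P unfolding is_path_def by (simp_all add: nth_eq_iff_index_eq)
  have miss: "missing_color f (P ! 1) (m 1)" "missing_color f (P ! 2) (m 2)"
    "missing_color f (P ! 3) (m 3)" "missing_color f (P ! 4) (m 4)"
    and m345: "m 1 \<in> {3,4,5}" "m 2 \<in> {3,4,5}" "m 3 \<in> {3,4,5}" "m 4 \<in> {3,4,5}"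
    using m[rule_format, of 1] m[rule_format, of 2] m[rule_format, of 3] m[rule_format, of 4] P(2)
    by simp_all
  obtain g where g: "interchanges f g"
    "share_missing_color g (P ! 1) (P ! 2) \<or> share_missing_color g (P ! 2) (P ! 3) \<or>
     share_missing_color g (P ! 3) (P ! 4)"
    using share_missing_color_four[OF pf V d miss m345] by blast
  then obtain i where i: "i \<in> {1, 2, 3}" "share_missing_color g (P ! i) (P ! Suc i)"
    by (auto simp: numeral_eq_Suc)
  from share_missing_color_free_color[OF pf P(1) col _ _ g(1) i(2)] i(1) P(2)
  have "\<exists>c\<in>{3, 4, 5}. c \<notin> colors_at E g (P ! i) \<union> colors_at E g (P ! Suc i)" by auto
  then have "\<exists>i\<in>{1, 2, 3}. \<exists>c\<in>{3, 4, 5}. c \<notin> colors_at E g (P ! i) \<union> colors_at E g (P ! Suc i)"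
    using i(1) by blast
  then show ?thesis using g(1) interchanges_345_proper[OF g(1) pf] by blast
qed

end

theorem lemma2p1:
  fixes V :: "'a set" and E :: "'a set set" and f :: "'a set \<Rightarrow> nat"
  assumes "simple_graph V E"
    and "regular V E 4"
    and "proper_edge_coloring E f 5"
  shows
   "(\<forall>P. is_path V E P \<and> length P = 5 \<and> (\<forall>e\<in>path_edges P. f e \<in> {1, 2}) \<and>
        \<not> ((\<forall>i\<in>{1,2,3::nat}. \<forall>j\<in>{1,2,3}. i \<noteq> j \<longrightarrow>
               card ((colors_at E f (P ! i) \<inter> colors_at E f (P ! j)) - {1, 2}) = 1) \<and>
            (\<forall>x\<in>neighbors E (P ! 2). x \<noteq> P ! 1 \<and> x \<noteq> P ! 3 \<longrightarrow>
               {3, 4, 5} \<subseteq> colors_at E f x))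
      \<longrightarrow> (\<exists>g. (path_interchange_345 V E)\<^sup>*\<^sup>* f g \<and> proper_edge_coloring E g 5 \<and>
              (\<exists>c\<in>{3, 4, 5}. c \<notin> colors_at E g (P ! 1) \<union> colors_at E g (P ! 2) \<or>
                              c \<notin> colors_at E g (P ! 2) \<union> colors_at E g (P ! 3))))
    \<and>
    (\<forall>P. is_path V E P \<and> length P = 6 \<and> (\<forall>e\<in>path_edges P. f e \<in> {1, 2})
      \<longrightarrow> (\<exists>g. (path_interchange_345 V E)\<^sup>*\<^sup>* f g \<and> proper_edge_coloring E g 5 \<and>
              (\<exists>i\<in>{1, 2, 3}. \<exists>c\<in>{3, 4, 5}.
                  c \<notin> colors_at E g (P ! i) \<union> colors_at E g (P ! Suc i))))"
proof -
  interpret four_regular_graph V E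
    by unfold_locales (fact assms(1), fact assms(2))
  show ?thesis
    using free_color_on_path_4[OF assms(3)] free_color_on_path_5[OF assms(3)] by blast
qed

end
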